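(* Let $T\in\mathcal{L}(\mathcal{H})$ have closed range and satisfy $T^\dagger T(T+T^* )=(T+T^* )T^\dagger T$. Then $T$ is a hypo-EP operator.
   Context: $\mathcal{H}$ is a Hilbert space, $\mathcal{L}(\mathcal{H})$ the bounded operators on it. For $T$ with closed range, $T^\dagger$ is its Moore–Penrose inverse (unique solution of $TT^\dagger T=T$, $T^\dagger TT^\dagger=T^\dagger$, $(T^\dagger T)^*=T^\dagger T$, $(TT^\dagger)^*=TT^\dagger$). $T$ is hypo-EP if $T$ has closed range and $T^\dagger T-TT^\dagger\ge 0$, equivalently $R(T)\subset R(T^* )$, where $R(\cdot)$ denotes range. *)

theory Defs
  imports "HOL-Analysis.Analysis"
begin

class complex_vector = real_vector +
  fixes scaleC :: "complex \<Rightarrow> 'a \<Rightarrow> 'a"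
  assumes scaleC_add_right: "scaleC a (x + y) = scaleC a x + scaleC a y"
    and scaleC_add_left: "scaleC (a + b) x = scaleC a x + scaleC b x"
    and scaleC_scaleC: "scaleC a (scaleC b x) = scaleC (a * b) x"
    and scaleC_one: "scaleC 1 x = x"
    and scaleR_scaleC: "scaleR r x = scaleC (complex_of_real r) x"

class complex_inner = complex_vector + real_normed_vector +
  fixes cinner :: "'a \<Rightarrow> 'a \<Rightarrow> complex"
  assumes cinner_commute: "cinner x y = cnj (cinner y x)"
    and cinner_add_left: "cinner (x + y) z = cinner x z + cinner y z"
    and cinner_scaleC_left: "cinner (scaleC r x) y = cnj r * cinner x y"
    and cinner_real: "Im (cinner x x) = 0"
    and cinner_ge_zero: "0 \<le> Re (cinner x x)"
    and cinner_eq_zero_iff: "cinner x x = 0 \<longleftrightarrow> x = 0"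
    and norm_eq_sqrt_cinner: "norm x = sqrt (Re (cinner x x))"

text \<open>A complex Hilbert space: a complete complex inner product space,
  i.e. a type of class \<open>{complex_inner, complete_space}\<close>.\<close>

definition bounded_clinear :: "('a::complex_inner \<Rightarrow> 'b::complex_inner) \<Rightarrow> bool" where
  "bounded_clinear T \<longleftrightarrow>
     (\<forall>x y. T (x + y) = T x + T y) \<and>
     (\<forall>c x. T (scaleC c x) = scaleC c (T x)) \<and>
     (\<exists>K. \<forall>x. norm (T x) \<le> norm x * K)"

definition is_adjoint :: "('a::complex_inner \<Rightarrow> 'a) \<Rightarrow> ('a \<Rightarrow> 'a) \<Rightarrow> bool" where
  "is_adjoint T S \<longleftrightarrow> (\<forall>x y. cinner (T x) y = cinner x (S y))"

text \<open>The adjoint \<open>T\<^sup>*\<close> (exists uniquely for bounded \<open>T\<close> on a Hilbert space).\<close>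
definition adj :: "('a::complex_inner \<Rightarrow> 'a) \<Rightarrow> ('a \<Rightarrow> 'a)" where
  "adj T = (THE S. is_adjoint T S)"

definition is_moore_penrose :: "('a::complex_inner \<Rightarrow> 'a) \<Rightarrow> ('a \<Rightarrow> 'a) \<Rightarrow> bool" where
  "is_moore_penrose T S \<longleftrightarrow> bounded_clinear S \<and>
     T \<circ> S \<circ> T = T \<and> S \<circ> T \<circ> S = S \<and>
     adj (S \<circ> T) = S \<circ> T \<and> adj (T \<circ> S) = T \<circ> S"

text \<open>Moore--Penrose inverse \<open>T\<^sup>\<dagger>\<close> (exists uniquely when \<open>T\<close> is bounded with closed range).\<close>
definition mp_inv :: "('a::complex_inner \<Rightarrow> 'a) \<Rightarrow> ('a \<Rightarrow> 'a)" where
  "mp_inv T = (THE S. is_moore_penrose T S)"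

definition positive_op :: "('a::complex_inner \<Rightarrow> 'a) \<Rightarrow> bool" where
  "positive_op A \<longleftrightarrow> (\<forall>x. Im (cinner (A x) x) = 0 \<and> 0 \<le> Re (cinner (A x) x))"

definition hypo_EP :: "('a::complex_inner \<Rightarrow> 'a) \<Rightarrow> bool" where
  "hypo_EP T \<longleftrightarrow> closed (range T) \<and>
     positive_op (\<lambda>x. mp_inv T (T x) - T (mp_inv T x))"

end

theory Submission
  imports Defs
begin

text \<open>
  Let \<open>P = T\<^sup>\<dagger>T\<close> and \<open>Q = TT\<^sup>\<dagger>\<close>, the orthogonal projections onto \<open>N(T)\<^sup>\<bottom>\<close> and \<open>R(T)\<close>.
  Since \<open>TP = T\<close> and \<open>P\<close> fixes \<open>R(T\<^sup>*) \<subseteq> N(T)\<^sup>\<bottom>\<close>, the hypothesis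
  \<open>P(T + T\<^sup>*) = (T + T\<^sup>*)P\<close> becomes \<open>(I - P)T = T\<^sup>*(I - P)\<close>. The left-hand side maps into
  \<open>N(T)\<close>, the right-hand side into \<open>R(T\<^sup>*) \<bottom> N(T)\<close>, so both vanish and \<open>PT = T\<close>. Hence
  \<open>PQ = Q = QP\<close>, and \<open>\<langle>(P - Q)x, x\<rangle> = \<parallel>Px\<parallel>\<^sup>2 - \<parallel>QPx\<parallel>\<^sup>2 \<ge> 0\<close>.

  The operators \<open>T\<^sup>*\<close> and \<open>T\<^sup>\<dagger>\<close> have to be constructed first: \<open>T\<^sup>*\<close> by the Riesz
  representation theorem, and \<open>T\<^sup>\<dagger>y\<close> as the preimage in \<open>N(T)\<^sup>\<bottom>\<close> of the projection of
  \<open>y\<close> onto \<open>R(T)\<close>; the latter is bounded by the open mapping theorem for operators with closed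
  range.
\<close>

section \<open>Complex inner product spaces\<close>

global_interpretation complex_vector: module "scaleC :: complex \<Rightarrow> 'a \<Rightarrow> 'a::complex_vector"
  by unfold_locales (simp_all add: scaleC_add_right scaleC_add_left scaleC_scaleC scaleC_one)

lemma cinner_add_right: "cinner x (y + z) = cinner x y + cinner x (z::'a::complex_inner)"
  by (metis cinner_add_left cinner_commute complex_cnj_add)

lemma cinner_scaleC_right: "cinner x (scaleC c y) = c * cinner x (y::'a::complex_inner)"
  by (metis cinner_commute cinner_scaleC_left complex_cnj_cnj complex_cnj_mult)

lemma additive_cinner_left: "Modules.additive (\<lambda>x::'a::complex_inner. cinner x y)"
  by unfold_locales (rule cinner_add_left)

lemma additive_cinner_right: "Modules.additive (cinner (x::'a::complex_inner))"
  by unfold_locales (rule cinner_add_right)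

lemma cinner_zero_left [simp]: "cinner 0 (y::'a::complex_inner) = 0"
  by (rule Modules.additive.zero[OF additive_cinner_left])

lemma cinner_zero_right [simp]: "cinner (x::'a::complex_inner) 0 = 0"
  by (rule Modules.additive.zero[OF additive_cinner_right])

lemma cinner_diff_left: "cinner (x - y) z = cinner x z - cinner y (z::'a::complex_inner)"
  by (rule Modules.additive.diff[OF additive_cinner_left])

lemma cinner_diff_right: "cinner x (y - z) = cinner x y - cinner x (z::'a::complex_inner)"
  by (rule Modules.additive.diff[OF additive_cinner_right])

lemma cinner_self: "cinner x x = of_real ((norm (x::'a::complex_inner))\<^sup>2)"
  using norm_eq_sqrt_cinner[of x] cinner_ge_zero[of x] cinner_real[of x]
  by (simp add: complex_eq_iff)

lemma cinner_commute_Re: "Re (cinner y x) = Re (cinner x (y::'a::complex_inner))"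
  by (subst cinner_commute) simp

lemma cinner_ext_left: "(\<And>z. cinner x z = cinner y z) \<Longrightarrow> x = (y::'a::complex_inner)"
  by (metis cinner_diff_left cinner_eq_zero_iff eq_iff_diff_eq_0)

lemma cinner_ext_right: "(\<And>z. cinner z x = cinner z y) \<Longrightarrow> x = (y::'a::complex_inner)"
  by (rule cinner_ext_left) (metis cinner_commute)

lemma norm_add_sq: "(norm (x + y))\<^sup>2 = (norm x)\<^sup>2 + (norm y)\<^sup>2 + 2 * Re (cinner x (y::'a::complex_inner))"
proof -
  have "cinner (x + y) (x + y) = cinner x x + cinner y y + (cinner x y + cinner y x)"
    by (simp add: cinner_add_left cinner_add_right)
  then show ?thesis
    unfolding cinner_self using cinner_commute_Re[of y x] by (simp add: complex_eq_iff)
qed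

lemma norm_add_sq_orth: "cinner x y = 0 \<Longrightarrow> (norm (x + y))\<^sup>2 = (norm x)\<^sup>2 + (norm (y::'a::complex_inner))\<^sup>2"
  by (simp add: norm_add_sq)

lemma parallelogram_law:
  "(norm (x + y))\<^sup>2 + (norm (x - y))\<^sup>2 = 2 * (norm x)\<^sup>2 + 2 * (norm (y::'a::complex_inner))\<^sup>2"
  using norm_add_sq[of x y] norm_add_sq[of x "- y"] complex_vector.scale_minus_left[of 1 y]
  by (simp add: Modules.additive.minus[OF additive_cinner_right])

lemma norm_scaleC: "norm (scaleC c x) = cmod c * norm (x::'a::complex_inner)"
proof -
  have "cinner (scaleC c x) (scaleC c x) = (c * cnj c) * cinner x x"
    by (simp add: cinner_scaleC_left cinner_scaleC_right)
  then have "(norm (scaleC c x))\<^sup>2 = (cmod c * norm x)\<^sup>2"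
    unfolding cinner_self complex_norm_square[symmetric] of_real_power[symmetric]
      of_real_mult[symmetric] of_real_eq_iff by (simp add: power_mult_distrib)
  then show ?thesis
    by (simp add: power2_eq_iff_nonneg)
qed

lemma norm_sq_remove_component:
  fixes x y :: "'a::complex_inner"
  assumes "y \<noteq> 0"
  shows "(norm (x - scaleC (cinner y x / cinner y y) y))\<^sup>2 = (norm x)\<^sup>2 - (cmod (cinner y x))\<^sup>2 / (norm y)\<^sup>2"
proof -
  define t where "t = cinner y x / cinner y y"
  have yy: "cinner y y \<noteq> 0"
    using assms by (simp add: cinner_eq_zero_iff)
  have "cinner y (x - scaleC t y) = 0"
    using yy by (simp add: t_def cinner_diff_right cinner_scaleC_right)
  then have "cinner (x - scaleC t y) (scaleC t y) = 0"
    by (metis cinner_commute cinner_scaleC_right complex_cnj_zero mult_zero_right)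
  then have "(norm x)\<^sup>2 = (norm (x - scaleC t y))\<^sup>2 + (norm (scaleC t y))\<^sup>2"
    using norm_add_sq_orth by fastforce
  moreover have "cmod t = cmod (cinner y x) / (norm y)\<^sup>2"
    by (simp add: t_def cinner_self norm_divide norm_power)
  then have "(norm (scaleC t y))\<^sup>2 = (cmod (cinner y x))\<^sup>2 / (norm y)\<^sup>2"
    using assms by (simp add: norm_scaleC field_simps eval_nat_numeral)
  ultimately show ?thesis
    by (simp add: t_def)
qed

lemma cauchy_schwarz: "cmod (cinner x y) \<le> norm x * norm (y::'a::complex_inner)"
proof (cases "x = 0")
  case False
  then have "(cmod (cinner x y))\<^sup>2 / (norm x)\<^sup>2 \<le> (norm y)\<^sup>2"
    using norm_sq_remove_component[of x y] by (metis diff_ge_0_iff_ge zero_le_power2)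
  then have "(cmod (cinner x y))\<^sup>2 \<le> (norm x * norm y)\<^sup>2"
    using False by (simp add: divide_le_eq power_mult_distrib mult.commute)
  then show ?thesis
    by (simp add: power2_le_iff_abs_le)
qed simp

section \<open>Orthogonal projection onto closed subspaces\<close>

lemma parallelogram_convex_bound:
  fixes x :: "'a::complex_inner"
  assumes "convex M" "v \<in> M" "w \<in> M" and lower: "\<And>u. u \<in> M \<Longrightarrow> d \<le> dist x u" and "0 \<le> d"
  shows "(norm (v - w))\<^sup>2 \<le> 2 * (dist x v)\<^sup>2 + 2 * (dist x w)\<^sup>2 - 4 * d\<^sup>2"
proof -
  define u where "u = (1/2) *\<^sub>R v + (1/2) *\<^sub>R w"
  have "u \<in> M"
    using assms(1-3) by (simp add: u_def convex_def)
  then have "d\<^sup>2 \<le> (dist x u)\<^sup>2"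
    using lower \<open>0 \<le> d\<close> by (simp add: power_mono)
  moreover have "(norm ((x - v) + (x - w)))\<^sup>2 = 4 * (dist x u)\<^sup>2"
  proof -
    have "(x - v) + (x - w) = 2 *\<^sub>R (x - u)"
      by (simp add: u_def algebra_simps scaleR_2)
    then show ?thesis
      by (simp add: dist_norm power_mult_distrib)
  qed
  moreover have "(norm ((x - v) - (x - w)))\<^sup>2 = (norm (v - w))\<^sup>2"
    by (simp add: norm_minus_commute)
  ultimately show ?thesis
    using parallelogram_law[of "x - v" "x - w"] by (simp add: dist_norm)
qed

lemma infdist_sq_approx:
  assumes "A \<noteq> {}" "0 < e"
  shows "\<exists>a\<in>A. (dist x a)\<^sup>2 \<le> (infdist x A)\<^sup>2 + e"
proof -
  have "infdist x A < sqrt ((infdist x A)\<^sup>2 + e)"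
    using assms(2) infdist_nonneg[of x A] by (simp add: real_less_rsqrt)
  then obtain a where a: "a \<in> A" "dist x a < sqrt ((infdist x A)\<^sup>2 + e)"
    using assms(1) cInf_lessD[of "dist x ` A"] by (auto simp: infdist_notempty)
  then have "(dist x a)\<^sup>2 < (sqrt ((infdist x A)\<^sup>2 + e))\<^sup>2"
    by (intro power_strict_mono) auto
  then have "(dist x a)\<^sup>2 \<le> (infdist x A)\<^sup>2 + e"
    using assms(2) by simp
  then show ?thesis
    using a(1) by blast
qed

lemma closest_point_exists:
  fixes x :: "'a::{complex_inner,complete_space}"
  assumes "convex M" "closed M" "M \<noteq> {}"
  obtains m where "m \<in> M" "\<And>v. v \<in> M \<Longrightarrow> dist x m \<le> dist x v"
proof -
  define d where "d = infdist x M"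
  define S where "S n = M \<inter> {v. (dist x v)\<^sup>2 \<le> d\<^sup>2 + 1 / Suc n}" for n
  have lower: "d \<le> dist x v" if "v \<in> M" for v
    using that by (simp add: d_def infdist_le)
  have "0 \<le> d"
    by (simp add: d_def infdist_nonneg)
  have "closed (S n)" for n
    unfolding S_def using assms(2)
    by (simp add: closed_Int closed_Collect_le continuous_on_power continuous_on_dist
        continuous_on_id continuous_on_const)
  moreover have "S n \<noteq> {}" for n
    using infdist_sq_approx[OF assms(3), of "1 / Suc n" x] by (auto simp: S_def d_def)
  moreover have "S n \<subseteq> S m" if "m \<le> n" for m n
    using that frac_le[of 1 1 "Suc m" "Suc n"] by (auto simp: S_def)
  \<comment> \<open>by the parallelogram law, the sets of almost closest points have vanishing diameter\<close>
  moreover have "\<exists>n. \<forall>v\<in>S n. \<forall>w\<in>S n. dist v w < e" if "0 < e" for e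
  proof -
    obtain n :: nat where "4 / e\<^sup>2 < n"
      using reals_Archimedean2 by blast
    then have n: "4 / e\<^sup>2 < Suc n"
      by simp
    have "dist v w < e" if "v \<in> S n" "w \<in> S n" for v w
    proof -
      have "(dist v w)\<^sup>2 \<le> 4 / Suc n"
        using parallelogram_convex_bound[OF assms(1) _ _ lower \<open>0 \<le> d\<close>, of v w] that
        unfolding S_def dist_norm by simp
      also have "\<dots> < e\<^sup>2"
        using n \<open>0 < e\<close> by (simp add: field_simps)
      finally show ?thesis
        using \<open>0 < e\<close> by (simp add: power_less_imp_less_base)
    qed
    then show ?thesis
      by blast
  qed
  ultimately obtain m where m: "\<And>n. m \<in> S n"
    using decreasing_closed_nest[of S] by blast
  have "(dist x m)\<^sup>2 \<le> d\<^sup>2"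
  proof (rule field_le_epsilon)
    fix e :: real
    assume "0 < e"
    then obtain n where "1 / Suc n < e"
      by (rule nat_approx_posE)
    then show "(dist x m)\<^sup>2 \<le> d\<^sup>2 + e"
      using m[of n] by (simp add: S_def)
  qed
  then have "dist x m \<le> d"
    using \<open>0 \<le> d\<close> power2_le_imp_le by blast
  show ?thesis
  proof (rule that)
    show "m \<in> M"
      using m[of 0] by (simp add: S_def)
    show "dist x m \<le> dist x v" if "v \<in> M" for v
      using lower[OF that] \<open>dist x m \<le> d\<close> by linarith
  qed
qed

lemma subspace_imp_convex: "complex_vector.subspace M \<Longrightarrow> convex (M :: 'a::complex_vector set)"
  unfolding convex_def scaleR_scaleC
  by (simp add: complex_vector.subspace_add complex_vector.subspace_scale)

lemma closest_point_orthogonal: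
  fixes x :: "'a::complex_inner"
  assumes "complex_vector.subspace M" "m \<in> M" "v \<in> M"
    and closest: "\<And>u. u \<in> M \<Longrightarrow> dist x m \<le> dist x u"
  shows "cinner v (x - m) = 0"
proof (cases "v = 0")
  case False
  define t where "t = cinner v (x - m) / cinner v v"
  have "m + scaleC t v \<in> M"
    using assms(1-3) by (simp add: complex_vector.subspace_add complex_vector.subspace_scale)
  then have "(norm (x - m))\<^sup>2 \<le> (norm ((x - m) - scaleC t v))\<^sup>2"
    using closest by (simp add: dist_norm diff_diff_eq power_mono)
  also have "\<dots> = (norm (x - m))\<^sup>2 - (cmod (cinner v (x - m)))\<^sup>2 / (norm v)\<^sup>2"
    unfolding t_def by (rule norm_sq_remove_component[OF False])
  finally have "(cmod (cinner v (x - m)))\<^sup>2 / (norm v)\<^sup>2 \<le> 0"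
    by simp
  then show ?thesis
    using False by (simp add: divide_le_0_iff)
qed simp

text \<open>\<open>proj M\<close> is meaningful only for closed subspaces \<open>M\<close>; otherwise the choice may
  be arbitrary.\<close>

definition proj :: "'a::complex_inner set \<Rightarrow> 'a \<Rightarrow> 'a" where
  "proj M x = (SOME m. m \<in> M \<and> (\<forall>v\<in>M. cinner v (x - m) = 0))"

lemma orthogonal_decomposition_unique:
  fixes x :: "'a::complex_inner"
  assumes "complex_vector.subspace M" "m \<in> M" "m' \<in> M"
    and "\<And>v. v \<in> M \<Longrightarrow> cinner v (x - m) = 0" "\<And>v. v \<in> M \<Longrightarrow> cinner v (x - m') = 0"
  shows "m = m'"
proof -
  have "m - m' \<in> M"
    using assms(1-3) by (rule complex_vector.subspace_diff)
  then have "cinner (m - m') ((x - m') - (x - m)) = 0"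
    using assms(4,5) by (simp add: cinner_diff_right)
  then show ?thesis
    by (simp add: cinner_eq_zero_iff)
qed

context
  fixes M :: "'a::{complex_inner,complete_space} set"
  assumes subspace: "complex_vector.subspace M" and closed: "closed M"
begin

lemma proj_in_and_orthogonal: "proj M x \<in> M \<and> (\<forall>v\<in>M. cinner v (x - proj M x) = 0)"
proof -
  obtain m where "m \<in> M" "\<And>v. v \<in> M \<Longrightarrow> dist x m \<le> dist x v"
    using closest_point_exists[OF subspace_imp_convex[OF subspace] closed]
      complex_vector.subspace_0[OF subspace] by blast
  then have "\<exists>m. m \<in> M \<and> (\<forall>v\<in>M. cinner v (x - m) = 0)"
    using closest_point_orthogonal[OF subspace] by blast
  then show ?thesis
    unfolding proj_def by (rule someI_ex)
qed

lemma proj_in: "proj M x \<in> M"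
  using proj_in_and_orthogonal by blast

lemma proj_orthogonal: "v \<in> M \<Longrightarrow> cinner v (x - proj M x) = 0"
  using proj_in_and_orthogonal by blast

lemma proj_unique:
  "m \<in> M \<Longrightarrow> (\<And>v. v \<in> M \<Longrightarrow> cinner v (x - m) = 0) \<Longrightarrow> proj M x = m"
  using orthogonal_decomposition_unique[OF subspace proj_in] proj_orthogonal by blast

lemma proj_id: "x \<in> M \<Longrightarrow> proj M x = x"
  by (rule proj_unique) simp_all

lemma proj_idem: "proj M (proj M x) = proj M x"
  by (rule proj_id[OF proj_in])

lemma cinner_proj: "v \<in> M \<Longrightarrow> cinner v (proj M x) = cinner v x"
  using proj_orthogonal[of v x] by (simp add: cinner_diff_right)

lemma proj_add: "proj M (x + y) = proj M x + proj M y"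
  by (rule proj_unique)
    (simp_all add: complex_vector.subspace_add[OF subspace] proj_in cinner_diff_right
      cinner_add_right cinner_proj)

lemma proj_scaleC: "proj M (scaleC c x) = scaleC c (proj M x)"
  by (rule proj_unique)
    (simp_all add: complex_vector.subspace_scale[OF subspace] proj_in cinner_diff_right
      cinner_scaleC_right cinner_proj)

lemma cinner_proj_selfadjoint: "cinner (proj M x) y = cinner x (proj M y)"
proof -
  have "cinner (proj M x) y = cinner (proj M x) (proj M y)"
    by (simp add: cinner_proj proj_in)
  also have "\<dots> = cnj (cinner (proj M y) x)"
    by (subst cinner_commute) (simp add: cinner_proj proj_in)
  finally show ?thesis
    by (metis cinner_commute)
qed

lemma norm_proj_le: "norm (proj M x) \<le> norm x"
  and norm_diff_proj_le: "norm (x - proj M x) \<le> norm x"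
proof -
  have "cinner (proj M x) (x - proj M x) = 0"
    by (simp add: proj_in proj_orthogonal)
  then have "(norm x)\<^sup>2 = (norm (proj M x))\<^sup>2 + (norm (x - proj M x))\<^sup>2"
    using norm_add_sq_orth by fastforce
  then show "norm (proj M x) \<le> norm x" "norm (x - proj M x) \<le> norm x"
    by (simp_all add: power2_le_imp_le)
qed

end

section \<open>Bounded operators and adjoints\<close>

lemma bounded_clinear_bounded_linear:
  assumes "bounded_clinear T"
  shows "bounded_linear T"
proof -
  obtain K where "\<And>x. norm (T x) \<le> norm x * K"
    using assms unfolding bounded_clinear_def by blast
  then show ?thesis
    using assms unfolding bounded_clinear_def
    by (intro bounded_linear_intro[where K = K]) (auto simp: scaleR_scaleC)
qed

lemma bounded_clinear_scaleC: "bounded_clinear T \<Longrightarrow> T (scaleC c x) = scaleC c (T x)"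
  unfolding bounded_clinear_def by blast

lemma bounded_clinear_compose:
  assumes "bounded_clinear S" "bounded_clinear T"
  shows "bounded_clinear (S \<circ> T)"
proof -
  have "bounded_linear (S \<circ> T)"
    using assms by (simp add: bounded_clinear_bounded_linear bounded_linear_compose o_def)
  then obtain K where "\<And>x. norm ((S \<circ> T) x) \<le> norm x * K"
    using bounded_linear.bounded by blast
  then show ?thesis
    using assms unfolding bounded_clinear_def by auto
qed

lemma kernel_subspace: "bounded_clinear T \<Longrightarrow> complex_vector.subspace {x. T x = 0}"
  unfolding complex_vector.subspace_def
  by (simp add: bounded_clinear_scaleC linear_add linear_0 bounded_linear.linear
      bounded_clinear_bounded_linear)

lemma kernel_closed: "bounded_clinear T \<Longrightarrow> closed {x. T x = 0}"
  by (intro closed_Collect_eq linear_continuous_on continuous_on_const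
      bounded_clinear_bounded_linear)

lemma range_subspace:
  assumes "bounded_clinear T"
  shows "complex_vector.subspace (range T)"
proof -
  have "linear T"
    using assms by (simp add: bounded_clinear_bounded_linear bounded_linear.linear)
  show ?thesis
    unfolding complex_vector.subspace_def
  proof (intro conjI ballI allI)
    show "0 \<in> range T"
      using rangeI[of T 0] by (simp add: linear_0 \<open>linear T\<close>)
    show "x + y \<in> range T" if "x \<in> range T" "y \<in> range T" for x y
      using that by (auto simp: linear_add[OF \<open>linear T\<close>, symmetric])
    show "scaleC c x \<in> range T" if "x \<in> range T" for c x
      using that by (auto simp: bounded_clinear_scaleC[OF assms, symmetric])
  qed
qed

lemma riesz_representation:
  fixes \<phi> :: "'a::{complex_inner,complete_space} \<Rightarrow> complex"
  assumes \<phi>: "bounded_linear \<phi>" and \<phi>_scaleC: "\<And>c x. \<phi> (scaleC c x) = c * \<phi> x"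
  obtains w where "\<And>x. \<phi> x = cinner w x"
proof (cases "\<forall>x. \<phi> x = 0")
  case False
  define K where "K = {x. \<phi> x = 0}"
  have "complex_vector.subspace K"
    using \<phi> unfolding K_def complex_vector.subspace_def
    by (simp add: \<phi>_scaleC linear_add linear_0 bounded_linear.linear)
  moreover have "closed K"
    unfolding K_def by (rule closed_Collect_eq[OF linear_continuous_on[OF \<phi>] continuous_on_const])
  ultimately have K: "complex_vector.subspace K" "closed K" .
  obtain x0 where "\<phi> x0 \<noteq> 0"
    using False by blast
  define z where "z = x0 - proj K x0"
  have z_orth: "\<And>v. \<phi> v = 0 \<Longrightarrow> cinner v z = 0"
    using proj_orthogonal[OF K] by (simp add: z_def K_def)
  have "\<phi> z = \<phi> x0"
    using proj_in[OF K, of x0] \<phi> by (simp add: z_def K_def linear_diff bounded_linear.linear)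
  then have "\<phi> z \<noteq> 0"
    using \<open>\<phi> x0 \<noteq> 0\<close> by simp
  then have "cinner z z \<noteq> 0"
    using \<phi> by (auto simp: cinner_eq_zero_iff linear_0 bounded_linear.linear)
  have "\<phi> x = cinner (scaleC (cnj (\<phi> z / cinner z z)) z) x" for x
  proof -
    have "\<phi> (x - scaleC (\<phi> x / \<phi> z) z) = 0"
      using \<open>\<phi> z \<noteq> 0\<close> \<phi> by (simp add: \<phi>_scaleC linear_diff bounded_linear.linear)
    then have "cinner z (x - scaleC (\<phi> x / \<phi> z) z) = 0"
      by (subst cinner_commute) (simp add: z_orth)
    then show ?thesis
      using \<open>\<phi> z \<noteq> 0\<close> \<open>cinner z z \<noteq> 0\<close>
      by (simp add: cinner_diff_right cinner_scaleC_right cinner_scaleC_left field_simps)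
  qed
  then show ?thesis
    using that by blast
qed (use that[of 0] in simp)

lemma adjoint_exists:
  fixes A :: "'a::{complex_inner,complete_space} \<Rightarrow> 'a"
  assumes A: "bounded_clinear A"
  shows "\<exists>B. is_adjoint A B"
proof -
  obtain K where K: "\<And>x. norm (A x) \<le> norm x * K"
    using A unfolding bounded_clinear_def by blast
  have "\<exists>w. \<forall>x. cinner y (A x) = cinner w x" for y
  proof -
    have "bounded_linear (\<lambda>x. cinner y (A x))"
    proof (rule bounded_linear_intro)
      show "cinner y (A (x + x')) = cinner y (A x) + cinner y (A x')" for x x'
        using A by (simp add: bounded_clinear_def cinner_add_right)
      show "cinner y (A (r *\<^sub>R x)) = r *\<^sub>R cinner y (A x)" for r x
        using A by (simp add: bounded_clinear_scaleC scaleR_scaleC cinner_scaleC_right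
            scaleR_conv_of_real)
      show "norm (cinner y (A x)) \<le> norm x * (norm y * K)" for x
        using cauchy_schwarz[of y "A x"] mult_left_mono[OF K norm_ge_zero, of y x]
        by (simp add: mult_ac)
    qed
    moreover have "cinner y (A (scaleC c x)) = c * cinner y (A x)" for c x
      using A by (simp add: bounded_clinear_scaleC cinner_scaleC_right)
    ultimately show ?thesis
      using riesz_representation[of "\<lambda>x. cinner y (A x)"] by blast
  qed
  then obtain B where "\<And>y x. cinner y (A x) = cinner (B y) x"
    by metis
  then have "is_adjoint A B"
    unfolding is_adjoint_def by (metis cinner_commute)
  then show ?thesis
    by blast
qed

lemma is_adjoint_unique:
  assumes "is_adjoint A B" "is_adjoint A B'"
  shows "B = B'"
proof (intro ext cinner_ext_right)
  show "cinner x (B y) = cinner x (B' y)" for x y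
    using assms unfolding is_adjoint_def by metis
qed

lemma adj_eqI: "is_adjoint A B \<Longrightarrow> adj A = B"
  unfolding adj_def using is_adjoint_unique by blast

lemma is_adjoint_adj:
  fixes A :: "'a::{complex_inner,complete_space} \<Rightarrow> 'a"
  shows "bounded_clinear A \<Longrightarrow> is_adjoint A (adj A)"
  using adjoint_exists adj_eqI by metis

section \<open>Bounded preimages under operators with closed range\<close>

lemma Baire_closed_cover:
  assumes "completely_metrizable_space X" "topspace X \<noteq> {}"
    and "\<And>n::nat. closedin X (G n)" "topspace X \<subseteq> (\<Union>n. G n)"
  shows "\<exists>n. X interior_of G n \<noteq> {}"
proof -
  have "(\<Union>n. G n) = topspace X"
    using assms(3,4) closedin_subset by blast
  then have "X interior_of (\<Union>n. G n) \<noteq> {}"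
    using assms(2) interior_of_topspace[of X] by simp
  moreover have "X interior_of (\<Union>n. G n) = {}" if "\<forall>n. X interior_of G n = {}"
    using that assms(3) by (intro Baire_category_alt[OF disjI1[OF assms(1)]]) auto
  ultimately show ?thesis
    by blast
qed

lemma closed_range_baire:
  fixes T :: "'a::real_normed_vector \<Rightarrow> 'b::{real_normed_vector,complete_space}"
  assumes "closed (range T)"
  obtains n y0 r where "0 < r" "y0 \<in> range T" "range T \<inter> ball y0 r \<subseteq> closure (T ` cball 0 (real n))"
proof -
  define X where "X = top_of_set (range T)"
  define G where "G n = range T \<inter> closure (T ` cball 0 (real n))" for n
  have "completely_metrizable_space X"
    unfolding X_def
    by (rule completely_metrizable_space_closedin[OF completely_metrizable_space_euclidean])
      (rule assms[unfolded closed_closedin])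
  moreover have "closedin X (G n)" for n
    unfolding X_def G_def by (rule closedin_closed_Int) simp
  moreover have "T x \<in> G (nat \<lceil>norm x\<rceil>)" for x
  proof -
    have "x \<in> cball 0 (real (nat \<lceil>norm x\<rceil>))"
      by (simp add: real_nat_ceiling_ge)
    then show ?thesis
      unfolding G_def by (intro IntI rangeI closure_subset[THEN subsetD] imageI)
  qed
  then have "topspace X \<subseteq> (\<Union>n. G n)"
    by (auto simp: X_def)
  ultimately obtain n where "X interior_of G n \<noteq> {}"
    using Baire_closed_cover[of X G] by (auto simp: X_def)
  then obtain U y0 where "openin X U" "y0 \<in> U" "U \<subseteq> G n"
    unfolding interior_of_def by blast
  then obtain V where "open V" "U = range T \<inter> V"
    unfolding X_def openin_open by blast
  then obtain r where "0 < r" "ball y0 r \<subseteq> V"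
    using \<open>y0 \<in> U\<close> open_contains_ball by blast
  show ?thesis
  proof (rule that)
    show "0 < r"
      by fact
    show "y0 \<in> range T" "range T \<inter> ball y0 r \<subseteq> closure (T ` cball 0 (real n))"
      using \<open>ball y0 r \<subseteq> V\<close> \<open>y0 \<in> U\<close> \<open>U \<subseteq> G n\<close> \<open>U = range T \<inter> V\<close>
      unfolding G_def by blast+
  qed
qed

lemma approx_preimage_near_zero:
  fixes T :: "'a::real_normed_vector \<Rightarrow> 'b::real_normed_vector"
  assumes "linear T" "y0 \<in> range T" "range T \<inter> ball y0 r \<subseteq> closure (T ` cball 0 K)"
    and "y \<in> range T" "norm y < r" "0 < e"
  shows "\<exists>x. norm x \<le> 2 * K \<and> norm (y - T x) < e"
proof -
  have "y0 + y \<in> range T"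
    using assms(1,2,4) by (auto simp: linear_add[OF assms(1), symmetric])
  moreover have "y0 + y \<in> ball y0 r"
    using assms(5) by (simp add: dist_norm)
  ultimately have "y0 + y \<in> closure (T ` cball 0 K)"
    using assms(3) by blast
  then obtain u1 where "u1 \<in> T ` cball 0 K" "dist u1 (y0 + y) < e / 2"
    using \<open>0 < e\<close> unfolding closure_approachable by (meson half_gt_zero)
  then obtain x1 where x1: "norm x1 \<le> K" "dist (T x1) (y0 + y) < e / 2"
    by auto
  have "y0 \<in> closure (T ` cball 0 K)"
    using assms(2,3,5) by (auto simp: le_less_trans[OF norm_ge_zero])
  then obtain u2 where "u2 \<in> T ` cball 0 K" "dist u2 y0 < e / 2"
    using \<open>0 < e\<close> unfolding closure_approachable by (meson half_gt_zero)
  then obtain x2 where x2: "norm x2 \<le> K" "dist (T x2) y0 < e / 2"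
    by auto
  have "norm (x1 - x2) \<le> 2 * K"
    using norm_triangle_ineq4[of x1 x2] x1(1) x2(1) by linarith
  moreover have "norm (y - T (x1 - x2)) < e"
  proof -
    have "y - T (x1 - x2) = (y0 + y - T x1) - (y0 - T x2)"
      by (simp add: linear_diff[OF assms(1)])
    then have "norm (y - T (x1 - x2)) \<le> dist (T x1) (y0 + y) + dist (T x2) y0"
      by (metis dist_commute dist_norm norm_triangle_ineq4)
    then show ?thesis
      using x1(2) x2(2) by linarith
  qed
  ultimately show ?thesis
    by blast
qed

lemma approx_preimage_scaled:
  fixes T :: "'a::real_normed_vector \<Rightarrow> 'b::real_normed_vector"
  assumes "linear T" "0 < r"
    and near: "\<And>y e. y \<in> range T \<Longrightarrow> norm y < r \<Longrightarrow> 0 < e \<Longrightarrow> \<exists>x. norm x \<le> K \<and> norm (y - T x) < e"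
    and "y \<in> range T" "0 < e"
  shows "\<exists>x. norm x \<le> 2 * K / r * norm y \<and> norm (y - T x) < e"
proof (cases "y = 0")
  case True
  then show ?thesis
    using \<open>0 < e\<close> by (intro exI[of _ 0]) (simp add: linear_0[OF assms(1)])
next
  case False
  define s where "s = r / (2 * norm y)"
  have "0 < s"
    using False \<open>0 < r\<close> by (simp add: s_def)
  have "s *\<^sub>R y \<in> range T"
    using \<open>y \<in> range T\<close> by (auto simp: linear_scale[OF assms(1), symmetric])
  moreover have "norm (s *\<^sub>R y) < r"
    using False \<open>0 < r\<close> by (simp add: s_def)
  ultimately obtain x where x: "norm x \<le> K" "norm (s *\<^sub>R y - T x) < s * e"
    using near \<open>0 < s\<close> \<open>0 < e\<close> by (meson mult_pos_pos)
  have "norm (x /\<^sub>R s) \<le> 2 * K / r * norm y"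
    using x(1) \<open>0 < s\<close> False \<open>0 < r\<close> by (simp add: s_def field_simps)
  moreover have "y - T (x /\<^sub>R s) = (s *\<^sub>R y - T x) /\<^sub>R s"
    using \<open>0 < s\<close> by (simp add: linear_scale[OF assms(1)] algebra_simps)
  then have "norm (y - T (x /\<^sub>R s)) = norm (s *\<^sub>R y - T x) / s"
    using \<open>0 < s\<close> by (simp add: divide_inverse_commute)
  then have "norm (y - T (x /\<^sub>R s)) < e"
    using x(2) \<open>0 < s\<close> by (simp add: divide_less_eq mult.commute)
  ultimately show ?thesis
    by blast
qed

lemma approx_preimage_residuals:
  fixes T :: "'a::real_normed_vector \<Rightarrow> 'b::real_normed_vector"
  assumes "linear T"
    and approx: "\<And>w e. w \<in> range T \<Longrightarrow> 0 < e \<Longrightarrow> \<exists>x. norm x \<le> C * norm w \<and> norm (w - T x) < e"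
    and "y \<in> range T" "y \<noteq> 0"
  shows "\<exists>x z. z 0 = y \<and> (\<forall>k. z (Suc k) = z k - T (x k)) \<and>
    (\<forall>k. norm (z k) \<le> norm y * (1/2) ^ k) \<and> (\<forall>k. norm (x k) \<le> C * norm (z k))"
proof -
  define step where
    "step w k = (SOME x. norm x \<le> C * norm w \<and> norm (w - T x) < norm y * (1/2) ^ Suc k)" for w k
  have "0 < norm y * (1/2) ^ Suc k" for k
    using assms(4) by simp
  then have step: "norm (step w k) \<le> C * norm w \<and> norm (w - T (step w k)) < norm y * (1/2) ^ Suc k"
    if "w \<in> range T" for w k
    unfolding step_def by (rule someI_ex[OF approx[OF that]])
  define z where "z = rec_nat y (\<lambda>k w. w - T (step w k))"
  define x where "x k = step (z k) k" for k
  have z_0: "z 0 = y" and z_Suc: "z (Suc k) = z k - T (x k)" for k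
    by (simp_all add: z_def x_def)
  have z: "z k \<in> range T \<and> norm (z k) \<le> norm y * (1/2) ^ k" for k
  proof (induction k)
    case 0
    then show ?case
      using assms(3) by (simp add: z_0)
  next
    case (Suc k)
    then obtain a where "z k = T a"
      by blast
    then have "z (Suc k) = T (a - x k)"
      by (simp add: z_Suc linear_diff[OF assms(1)])
    moreover have "norm (z (Suc k)) < norm y * (1/2) ^ Suc k"
      using step[of "z k" k] Suc unfolding z_Suc x_def by blast
    ultimately show ?case
      by simp
  qed
  have "norm (x k) \<le> C * norm (z k)" for k
    using step[of "z k" k] z[of k] by (simp add: x_def)
  then show ?thesis
    using z_0 z_Suc z by blast
qed

lemma approx_preimage_series:
  fixes T :: "'a::real_normed_vector \<Rightarrow> 'b::real_normed_vector"
  assumes "linear T"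
    and approx: "\<And>w e. w \<in> range T \<Longrightarrow> 0 < e \<Longrightarrow> \<exists>x. norm x \<le> C * norm w \<and> norm (w - T x) < e"
    and "y \<in> range T"
  obtains x where "\<And>k. norm (x k) \<le> C * norm y * (1/2) ^ k" "(\<lambda>k. T (x k)) sums y"
proof (cases "y = 0")
  case True
  then show ?thesis
    using that[of "\<lambda>k. 0"] by (simp add: linear_0[OF assms(1)])
next
  case False
  from approx_preimage_residuals[OF assms False] obtain x z where z_0: "z 0 = y"
    and z_Suc: "\<forall>k. z (Suc k) = z k - T (x k)" and z: "\<forall>k. norm (z k) \<le> norm y * (1/2) ^ k"
    and x: "\<forall>k. norm (x k) \<le> C * norm (z k)"
    by blast
  have "0 \<le> C * norm y"
    using order_trans[OF norm_ge_zero x[rule_format, of 0]] by (simp add: z_0)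
  then have "0 \<le> C"
    using False by (simp add: zero_le_mult_iff)
  have "norm (x k) \<le> C * norm y * (1/2) ^ k" for k
    using order_trans[OF x[rule_format] mult_left_mono[OF z[rule_format] \<open>0 \<le> C\<close>]]
    by (simp add: mult.assoc)
  moreover have "(\<lambda>k. T (x k)) sums y"
  proof -
    have "(\<lambda>k. norm y * (1/2) ^ k) \<longlonglongrightarrow> 0"
      by (simp add: LIMSEQ_power_zero tendsto_mult_right_zero)
    then have "(\<lambda>k. norm (z k)) \<longlonglongrightarrow> 0"
      by (rule tendsto_sandwich[rotated 2, OF tendsto_const]) (use z in auto)
    then have "z \<longlonglongrightarrow> 0"
      by (rule tendsto_norm_zero_cancel)
    then have "(\<lambda>k. z k - z (Suc k)) sums (z 0 - 0)"
      by (rule telescope_sums')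
    then show ?thesis
      by (simp add: z_Suc z_0)
  qed
  ultimately show ?thesis
    by (rule that)
qed

lemma sum_half_powers: "m \<le> n \<Longrightarrow> (\<Sum>k\<in>{m<..n}. (1/2::real) ^ k) = (1/2) ^ m - (1/2) ^ n"
proof (induction n rule: dec_induct)
  case (step n)
  then have "{m<..Suc n} = insert (Suc n) {m<..n}"
    by auto
  then show ?case
    using step by simp
qed simp

lemma geometrically_bounded_summable:
  fixes x :: "nat \<Rightarrow> 'a::{real_normed_vector,complete_space}"
  assumes bound: "\<And>k. norm (x k) \<le> c * (1/2) ^ k"
  shows "summable x" "norm (suminf x) \<le> 2 * c"
proof -
  have "0 \<le> c"
    using order_trans[OF norm_ge_zero bound[of 0]] by simp
  have "norm (sum x {m<..n}) \<le> c * (1/2) ^ m" if "m \<le> n" for m n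
  proof -
    have "norm (sum x {m<..n}) \<le> (\<Sum>k\<in>{m<..n}. c * (1/2) ^ k)"
      by (rule order_trans[OF norm_sum sum_mono[OF bound]])
    also have "\<dots> = c * ((1/2) ^ m - (1/2) ^ n)"
      using that by (simp add: sum_distrib_left[symmetric] sum_half_powers)
    also have "\<dots> \<le> c * (1/2) ^ m"
      using \<open>0 \<le> c\<close> by (intro mult_left_mono) simp_all
    finally show ?thesis .
  qed
  moreover have "(\<lambda>m. c * (1/2::real) ^ m) \<longlonglongrightarrow> 0"
    by (simp add: LIMSEQ_power_zero tendsto_mult_right_zero)
  ultimately show "summable x"
    by (intro summable_bounded_partials[of x "\<lambda>m. c * (1/2) ^ m"]) auto
  have "norm (sum x {..<n}) \<le> 2 * c" for n
  proof -
    have "norm (sum x {..<n}) \<le> (\<Sum>k<n. c * (1/2) ^ k)"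
      by (rule order_trans[OF norm_sum sum_mono[OF bound]])
    also have "\<dots> = 2 * c * (1 - (1/2) ^ n)"
      by (simp add: sum_distrib_left[symmetric] sum_gp_strict)
    also have "\<dots> \<le> 2 * c * 1"
      using \<open>0 \<le> c\<close> by (intro mult_left_mono) simp_all
    finally show ?thesis
      by simp
  qed
  then show "norm (suminf x) \<le> 2 * c"
    using LIMSEQ_le_const2[OF tendsto_norm[OF summable_LIMSEQ[OF \<open>summable x\<close>]]] by blast
qed

lemma exact_preimage_from_approx:
  fixes T :: "'a::{real_normed_vector,complete_space} \<Rightarrow> 'b::real_normed_vector"
  assumes "bounded_linear T"
    and approx: "\<And>w e. w \<in> range T \<Longrightarrow> 0 < e \<Longrightarrow> \<exists>x. norm x \<le> C * norm w \<and> norm (w - T x) < e"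
    and "y \<in> range T"
  shows "\<exists>x. T x = y \<and> norm x \<le> 2 * C * norm y"
proof -
  obtain x where x: "\<And>k. norm (x k) \<le> C * norm y * (1/2) ^ k" and sums: "(\<lambda>k. T (x k)) sums y"
    using approx_preimage_series[OF bounded_linear.linear[OF assms(1)] approx assms(3)] by blast
  have "summable x" "norm (suminf x) \<le> 2 * (C * norm y)"
    by (rule geometrically_bounded_summable[OF x])+
  moreover have "T (suminf x) = y"
    using sums_unique2[OF bounded_linear.sums[OF assms(1) summable_sums[OF \<open>summable x\<close>]] sums] .
  ultimately show ?thesis
    by (auto simp: mult.assoc)
qed

lemma closed_range_preimage_bound:
  fixes T :: "'a::{real_normed_vector,complete_space} \<Rightarrow> 'b::{real_normed_vector,complete_space}"
  assumes "bounded_linear T" "closed (range T)"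
  obtains C where "\<And>y. y \<in> range T \<Longrightarrow> \<exists>x. T x = y \<and> norm x \<le> C * norm y"
proof -
  note lin = bounded_linear.linear[OF assms(1)]
  obtain n y0 r where "0 < r" and y0: "y0 \<in> range T"
    and sub: "range T \<inter> ball y0 r \<subseteq> closure (T ` cball 0 (real n))"
    by (rule closed_range_baire[OF assms(2)])
  have "\<And>y e. y \<in> range T \<Longrightarrow> norm y < r \<Longrightarrow> 0 < e \<Longrightarrow>
      \<exists>x. norm x \<le> 2 * real n \<and> norm (y - T x) < e"
    by (rule approx_preimage_near_zero[OF lin y0 sub])
  then have "\<And>y e. y \<in> range T \<Longrightarrow> 0 < e \<Longrightarrow>
      \<exists>x. norm x \<le> 2 * (2 * real n) / r * norm y \<and> norm (y - T x) < e"
    by (rule approx_preimage_scaled[OF lin \<open>0 < r\<close>])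
  then show ?thesis
    by (rule that[OF exact_preimage_from_approx[OF assms(1)]])
qed

section \<open>The Moore--Penrose inverse\<close>

locale moore_penrose_construction =
  fixes T S :: "'a::{complex_inner,complete_space} \<Rightarrow> 'a"
  assumes bounded: "bounded_clinear T"
    and closed_range: "closed (range T)"
    and S_orthogonal_kernel: "\<And>n y. T n = 0 \<Longrightarrow> cinner n (S y) = 0"
    and T_S: "\<And>y. T (S y) = proj (range T) y"
begin

lemma linear_T: "linear T"
  using bounded by (simp add: bounded_clinear_bounded_linear bounded_linear.linear)

lemma range_closed_subspace: "complex_vector.subspace (range T)" "closed (range T)"
  using range_subspace[OF bounded] closed_range by auto

lemma kernel_closed_subspace: "complex_vector.subspace {x. T x = 0}" "closed {x. T x = 0}"
  using kernel_subspace[OF bounded] kernel_closed[OF bounded] by auto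

lemma S_unique:
  assumes "\<And>n. T n = 0 \<Longrightarrow> cinner n p = 0" "T p = proj (range T) y"
  shows "S y = p"
proof -
  have "T (S y - p) = 0"
    by (simp add: linear_diff[OF linear_T] T_S assms(2))
  then have "cinner (S y - p) (S y - p) = 0"
    by (simp add: cinner_diff_right S_orthogonal_kernel assms(1))
  then show ?thesis
    by (simp add: cinner_eq_zero_iff)
qed

lemma S_add: "S (x + y) = S x + S y"
  by (rule S_unique)
    (simp_all add: cinner_add_right S_orthogonal_kernel linear_add[OF linear_T] T_S
      proj_add[OF range_closed_subspace])

lemma S_scaleC: "S (scaleC c x) = scaleC c (S x)"
  by (rule S_unique)
    (simp_all add: cinner_scaleC_right S_orthogonal_kernel bounded_clinear_scaleC[OF bounded] T_S
      proj_scaleC[OF range_closed_subspace])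

lemma S_eqI:
  assumes "T x = proj (range T) y"
  shows "S y = x - proj {x. T x = 0} x"
proof (rule S_unique)
  show "cinner n (x - proj {x. T x = 0} x) = 0" if "T n = 0" for n
    using proj_orthogonal[OF kernel_closed_subspace] that by simp
  have "T (proj {x. T x = 0} x) = 0"
    using proj_in[OF kernel_closed_subspace] by simp
  then show "T (x - proj {x. T x = 0} x) = proj (range T) y"
    by (simp add: linear_diff[OF linear_T] assms)
qed

lemma S_T: "S (T x) = x - proj {x. T x = 0} x"
  by (rule S_eqI) (simp add: proj_id[OF range_closed_subspace])

lemma T_S_T: "T (S (T x)) = T x"
  by (simp add: T_S proj_id[OF range_closed_subspace])

lemma S_T_S: "S (T (S y)) = S y"
  by (rule S_unique) (simp_all add: S_orthogonal_kernel T_S proj_idem[OF range_closed_subspace])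

lemma S_bounded: "bounded_clinear S"
proof -
  obtain C where C: "\<And>y. y \<in> range T \<Longrightarrow> \<exists>x. T x = y \<and> norm x \<le> C * norm y"
    using closed_range_preimage_bound[OF bounded_clinear_bounded_linear[OF bounded] closed_range]
    by blast
  have "norm (S y) \<le> norm y * max C 0" for y
  proof -
    obtain x where x: "T x = proj (range T) y" "norm x \<le> C * norm (proj (range T) y)"
      using C[OF proj_in[OF range_closed_subspace]] by blast
    have "S y = x - proj {x. T x = 0} x"
      using x(1) by (rule S_eqI)
    then have "norm (S y) \<le> norm x"
      using norm_diff_proj_le[OF kernel_closed_subspace] by simp
    also have "\<dots> \<le> max C 0 * norm (proj (range T) y)"
      using x(2) by (meson max.cobounded1 mult_right_mono norm_ge_zero order_trans)
    also have "\<dots> \<le> max C 0 * norm y"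
      using norm_proj_le[OF range_closed_subspace] by (simp add: mult_left_mono)
    finally show ?thesis
      by (simp add: mult.commute)
  qed
  then show ?thesis
    unfolding bounded_clinear_def using S_add S_scaleC by blast
qed

lemma is_moore_penrose: "is_moore_penrose T S"
proof -
  have "is_adjoint (S \<circ> T) (S \<circ> T)"
    unfolding is_adjoint_def
    by (simp add: S_T cinner_diff_left cinner_diff_right
        cinner_proj_selfadjoint[OF kernel_closed_subspace])
  moreover have "is_adjoint (T \<circ> S) (T \<circ> S)"
    unfolding is_adjoint_def by (simp add: T_S cinner_proj_selfadjoint[OF range_closed_subspace])
  ultimately show ?thesis
    unfolding is_moore_penrose_def using S_bounded T_S_T S_T_S
    by (simp add: adj_eqI fun_eq_iff)
qed

end

lemma moore_penrose_exists:
  fixes T :: "'a::{complex_inner,complete_space} \<Rightarrow> 'a"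
  assumes "bounded_clinear T" "closed (range T)"
  shows "\<exists>S. is_moore_penrose T S"
proof -
  have K: "complex_vector.subspace {x. T x = 0}" "closed {x. T x = 0}"
    using kernel_subspace[OF assms(1)] kernel_closed[OF assms(1)] by auto
  have "\<exists>p. (\<forall>n. T n = 0 \<longrightarrow> cinner n p = 0) \<and> T p = proj (range T) y" for y
  proof -
    obtain a where a: "T a = proj (range T) y"
      using proj_in[OF range_subspace[OF assms(1)] assms(2), of y] by (metis rangeE)
    have "T (proj {x. T x = 0} a) = 0"
      using proj_in[OF K] by simp
    then have "T (a - proj {x. T x = 0} a) = proj (range T) y"
      using a assms(1)
      by (simp add: linear_diff bounded_linear.linear bounded_clinear_bounded_linear)
    then show ?thesis
      using proj_orthogonal[OF K] by blast
  qed
  then obtain S where "\<And>y. (\<forall>n. T n = 0 \<longrightarrow> cinner n (S y) = 0) \<and> T (S y) = proj (range T) y"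
    by metis
  then interpret moore_penrose_construction T S
    using assms by unfold_locales auto
  show ?thesis
    using is_moore_penrose by blast
qed

lemma moore_penrose_selfadjoint:
  fixes T :: "'a::{complex_inner,complete_space} \<Rightarrow> 'a"
  assumes "bounded_clinear T" "is_moore_penrose T S"
  shows "is_adjoint (\<lambda>x. S (T x)) (\<lambda>x. S (T x))" "is_adjoint (\<lambda>x. T (S x)) (\<lambda>x. T (S x))"
proof -
  have "bounded_clinear S"
    using assms(2) by (simp add: is_moore_penrose_def)
  then have "is_adjoint (S \<circ> T) (adj (S \<circ> T))" "is_adjoint (T \<circ> S) (adj (T \<circ> S))"
    using assms(1) by (simp_all add: is_adjoint_adj bounded_clinear_compose)
  then show "is_adjoint (\<lambda>x. S (T x)) (\<lambda>x. S (T x))" "is_adjoint (\<lambda>x. T (S x)) (\<lambda>x. T (S x))"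
    using assms(2) by (simp_all add: is_moore_penrose_def o_def)
qed

lemma moore_penrose_identities:
  assumes "is_moore_penrose T S"
  shows "T (S (T x)) = T x" "S (T (S x)) = S x"
  using assms by (simp_all add: is_moore_penrose_def fun_eq_iff)

lemma moore_penrose_unique_left:
  fixes T :: "'a::{complex_inner,complete_space} \<Rightarrow> 'a"
  assumes "bounded_clinear T" "is_moore_penrose T S" "is_moore_penrose T S'"
  shows "S (T x) = S' (T x)"
proof (rule cinner_ext_left)
  note id = moore_penrose_identities[OF assms(2)] moore_penrose_identities[OF assms(3)]
  note adj = moore_penrose_selfadjoint(1)[OF assms(1,2), unfolded is_adjoint_def]
    moore_penrose_selfadjoint(1)[OF assms(1,3), unfolded is_adjoint_def]
  fix y
  have "cinner (S (T x)) y = cinner (S (T (S' (T x)))) y"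
    by (simp add: id)
  also have "\<dots> = cinner (S' (T x)) (S (T y))"
    by (simp add: adj)
  also have "\<dots> = cinner (S' (T x)) y"
    by (simp add: adj id)
  finally show "cinner (S (T x)) y = cinner (S' (T x)) y" .
qed

lemma moore_penrose_unique_right:
  fixes T :: "'a::{complex_inner,complete_space} \<Rightarrow> 'a"
  assumes "bounded_clinear T" "is_moore_penrose T S" "is_moore_penrose T S'"
  shows "T (S x) = T (S' x)"
proof (rule cinner_ext_left)
  note id = moore_penrose_identities[OF assms(2)] moore_penrose_identities[OF assms(3)]
  note adj = moore_penrose_selfadjoint(2)[OF assms(1,2), unfolded is_adjoint_def]
    moore_penrose_selfadjoint(2)[OF assms(1,3), unfolded is_adjoint_def]
  fix y
  have "cinner (T (S x)) y = cinner (T (S' (T (S x)))) y"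
    by (simp add: id)
  also have "\<dots> = cinner (T (S x)) (T (S' y))"
    by (simp add: adj)
  also have "\<dots> = cinner (T (S' x)) y"
    by (simp add: adj id)
  finally show "cinner (T (S x)) y = cinner (T (S' x)) y" .
qed

lemma moore_penrose_unique:
  fixes T :: "'a::{complex_inner,complete_space} \<Rightarrow> 'a"
  assumes "bounded_clinear T" "is_moore_penrose T S" "is_moore_penrose T S'"
  shows "S = S'"
proof
  fix x
  have "S x = S (T (S x))"
    by (simp add: moore_penrose_identities[OF assms(2)])
  also have "\<dots> = S' (T (S' x))"
    by (simp add: moore_penrose_unique_left[OF assms] moore_penrose_unique_right[OF assms])
  also have "\<dots> = S' x"
    by (simp add: moore_penrose_identities[OF assms(3)])
  finally show "S x = S' x" .
qed

lemma mp_inv_is_moore_penrose: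
  fixes T :: "'a::{complex_inner,complete_space} \<Rightarrow> 'a"
  assumes "bounded_clinear T" "closed (range T)"
  shows "is_moore_penrose T (mp_inv T)"
proof -
  obtain S where "is_moore_penrose T S"
    using moore_penrose_exists[OF assms] by blast
  then show ?thesis
    unfolding mp_inv_def
    using theI[of "is_moore_penrose T" S] moore_penrose_unique[OF assms(1)] by blast
qed

section \<open>Orthogonal projections and hypo-EP operators\<close>

definition is_orthoproj :: "('a::complex_inner \<Rightarrow> 'a) \<Rightarrow> bool" where
  "is_orthoproj P \<longleftrightarrow> is_adjoint P P \<and> (\<forall>x. P (P x) = P x)"

lemma cinner_orthoproj_self:
  assumes "is_orthoproj P"
  shows "cinner (P x) x = of_real ((norm (P x))\<^sup>2)"
proof -
  have "cinner (P x) x = cinner (P (P x)) x"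
    using assms by (simp add: is_orthoproj_def)
  also have "\<dots> = cinner (P x) (P x)"
    using assms by (simp add: is_orthoproj_def is_adjoint_def)
  finally show ?thesis
    by (simp add: cinner_self)
qed

lemma norm_orthoproj_le:
  assumes "is_orthoproj P"
  shows "norm (P x) \<le> norm x"
proof -
  have "(norm (P x))\<^sup>2 = cmod (cinner (P x) x)"
    by (simp add: cinner_orthoproj_self[OF assms] norm_power)
  also have "\<dots> \<le> norm (P x) * norm x"
    by (rule cauchy_schwarz)
  finally show ?thesis
    by (cases "P x = 0") (simp_all add: power2_eq_square)
qed

lemma orthoproj_absorbs:
  assumes "is_orthoproj P" "is_orthoproj Q" "\<And>x. P (Q x) = Q x"
  shows "Q (P x) = Q x"
proof (rule cinner_ext_left)
  fix y
  show "cinner (Q (P x)) y = cinner (Q x) y"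
    using assms by (simp add: is_orthoproj_def is_adjoint_def)
qed

lemma positive_op_orthoproj_diff:
  assumes "is_orthoproj P" "is_orthoproj Q" "\<And>x. P (Q x) = Q x"
  shows "positive_op (\<lambda>x. P x - Q x)"
proof -
  have "norm (Q x) \<le> norm (P x)" for x
    using norm_orthoproj_le[OF assms(2), of "P x"] orthoproj_absorbs[OF assms] by simp
  then have "(norm (Q x))\<^sup>2 \<le> (norm (P x))\<^sup>2" for x
    by (simp add: power_mono)
  then show ?thesis
    unfolding positive_op_def
    by (simp add: cinner_diff_left cinner_orthoproj_self[OF assms(1)]
        cinner_orthoproj_self[OF assms(2)])
qed

lemma moore_penrose_orthoprojs:
  fixes T :: "'a::{complex_inner,complete_space} \<Rightarrow> 'a"
  assumes "bounded_clinear T" "is_moore_penrose T S"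
  shows "is_orthoproj (\<lambda>x. S (T x))" "is_orthoproj (\<lambda>x. T (S x))"
  using moore_penrose_selfadjoint[OF assms] moore_penrose_identities[OF assms(2)]
  by (simp_all add: is_orthoproj_def)

lemma moore_penrose_fixes_kernel_orthogonal:
  fixes T :: "'a::{complex_inner,complete_space} \<Rightarrow> 'a"
  assumes "bounded_clinear T" "is_moore_penrose T S" and z: "\<And>n. T n = 0 \<Longrightarrow> cinner n z = 0"
  shows "S (T z) = z"
proof -
  define w where "w = z - S (T z)"
  have "T w = 0"
    using assms(1) moore_penrose_identities[OF assms(2)]
    by (simp add: w_def linear_diff bounded_linear.linear bounded_clinear_bounded_linear)
  have "S 0 = 0"
    using assms(2) unfolding is_moore_penrose_def
    by (simp add: linear_0 bounded_linear.linear bounded_clinear_bounded_linear)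
  have "cinner (S (T z)) w = cinner z (S (T w))"
    using moore_penrose_selfadjoint(1)[OF assms(1,2)] by (simp add: is_adjoint_def)
  then have "cinner w (S (T z)) = 0"
    using \<open>T w = 0\<close> \<open>S 0 = 0\<close> by (subst cinner_commute) simp
  moreover have "cinner w w = cinner w z - cinner w (S (T z))"
    using cinner_diff_right[of w z "S (T z)"] by (simp only: w_def[symmetric])
  ultimately have "cinner w w = 0"
    using z[OF \<open>T w = 0\<close>] by simp
  then show ?thesis
    by (simp add: w_def cinner_eq_zero_iff)
qed

lemma moore_penrose_range_inclusion:
  fixes T :: "'a::{complex_inner,complete_space} \<Rightarrow> 'a"
  assumes T: "bounded_clinear T" and S: "is_moore_penrose T S" and A: "is_adjoint T A"
    and commute: "S \<circ> T \<circ> (\<lambda>x. T x + A x) = (\<lambda>x. T x + A x) \<circ> (S \<circ> T)"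
  shows "S (T (T x)) = T x"
proof -
  have lin: "linear (\<lambda>x. S (T x))"
    using T S unfolding is_moore_penrose_def
    by (simp add: bounded_linear.linear bounded_clinear_bounded_linear
        bounded_clinear_compose[unfolded o_def])
  have "cinner n (A y) = cinner (T n) y" for n y
    using A by (simp add: is_adjoint_def)
  then have "cinner n (A y) = 0" if "T n = 0" for n y
    using that by simp
  then have "S (T (A x)) = A x"
    by (rule moore_penrose_fixes_kernel_orthogonal[OF T S])
  with fun_cong[OF commute, of x] have "S (T (T x)) + A x = T x + A (S (T x))"
    using moore_penrose_identities[OF S] by (simp add: linear_add[OF lin])
  then have w_eq: "T x - S (T (T x)) = A x - A (S (T x))"
    by (simp add: algebra_simps)
  \<comment> \<open>\<open>w\<close> lies in \<open>N(T)\<close> and in \<open>R(T\<^sup>*)\<close>, hence is orthogonal to itself\<close>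
  define w where "w = T x - S (T (T x))"
  have "T w = 0"
    using T moore_penrose_identities[OF S]
    by (simp add: w_def linear_diff bounded_linear.linear bounded_clinear_bounded_linear)
  have "cinner w w = cinner w (A x - A (S (T x)))"
    by (subst (2) w_def) (simp only: w_eq)
  also have "\<dots> = cinner (T w) x - cinner (T w) (S (T x))"
    using A by (simp add: cinner_diff_right is_adjoint_def)
  also have "\<dots> = 0"
    using \<open>T w = 0\<close> by simp
  finally show ?thesis
    by (simp add: w_def cinner_eq_zero_iff)
qed

theorem mainTheorem3:
  fixes T :: "'a::{complex_inner, complete_space} \<Rightarrow> 'a"
  assumes "bounded_clinear T"
    and "closed (range T)"
    and "mp_inv T \<circ> T \<circ> (\<lambda>x. T x + adj T x) = (\<lambda>x. T x + adj T x) \<circ> (mp_inv T \<circ> T)"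
  shows "hypo_EP T"
proof -
  have S: "is_moore_penrose T (mp_inv T)"
    using assms(1,2) by (rule mp_inv_is_moore_penrose)
  have "mp_inv T (T (T (mp_inv T x))) = T (mp_inv T x)" for x
    using moore_penrose_range_inclusion[OF assms(1) S is_adjoint_adj[OF assms(1)] assms(3)] .
  then have "positive_op (\<lambda>x. mp_inv T (T x) - T (mp_inv T x))"
    using moore_penrose_orthoprojs[OF assms(1) S] by (rule positive_op_orthoproj_diff[rotated 2])
  then show ?thesis
    unfolding hypo_EP_def using assms(2) by blast
qed

end
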